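(* Let $L$ be a distributive lattice, $n\ge1$, $a_i,b_i\in L$ with $a_i<b_i$ for $i\in[n]$, $\widehat{\mathbf e}_I\in L^n$ ($I\subseteq[n]$) the tuple with $i$-th component $b_i$ if $i\in I$ and $a_i$ otherwise, $D=\{\widehat{\mathbf e}_I:I\subseteq[n]\}$, and $f\colon D\to L$ satisfying $$f(\widehat{\mathbf e}_{I\cup\{k\}})\wedge a_k\le f(\widehat{\mathbf e}_I)\le f(\widehat{\mathbf e}_{I\setminus\{k\}})\vee b_k\quad\text{for all } I\subseteq[n],\ k\in[n].$$ Then for all $S\subseteq T\subseteq[n]$, $$f(\widehat{\mathbf e}_T)\wedge\bigwedge_{k\in T\setminus S}a_k\le f(\widehat{\mathbf e}_S)\quad\text{and}\quad f(\widehat{\mathbf e}_T)\le f(\widehat{\mathbf e}_S)\vee\bigvee_{k\in T\setminus S}b_k.$$ *)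

theory Defs
  imports Main
begin

text \<open>The tuple e-hat_I in L^n, represented as a function on nat; components
outside [n] = {1..n} are fixed to a i (irrelevant).\<close>
definition ehat :: "(nat \<Rightarrow> 'a) \<Rightarrow> (nat \<Rightarrow> 'a) \<Rightarrow> nat set \<Rightarrow> (nat \<Rightarrow> 'a)" where
  "ehat a b I = (\<lambda>i. if i \<in> I then b i else a i)"

end

theory Submission
  imports Defs
begin

text \<open>Removing the elements of T - S one at a time, each step loses at most a meet with some
  a_k (respectively a join with some b_k); composing the steps gives the bounds.\<close>

lemma inf_Inf_fin_le_diff:
  fixes g :: "'i set \<Rightarrow> 'a :: lattice" and a :: "'i \<Rightarrow> 'a"
  assumes step: "\<And>I k. I \<subseteq> U \<Longrightarrow> k \<in> U \<Longrightarrow> inf (g (I \<union> {k})) (a k) \<le> g I"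
    and "finite R" "R \<noteq> {}" "R \<subseteq> T" "T \<subseteq> U"
  shows "inf (g T) (Inf_fin (a ` R)) \<le> g (T - R)"
  using \<open>finite R\<close> \<open>R \<noteq> {}\<close> \<open>R \<subseteq> T\<close>
proof (induction R rule: finite_ne_induct)
  case (singleton k)
  then have "(T - {k}) \<union> {k} = T" by auto
  then show ?case
    using step[of "T - {k}" k] singleton \<open>T \<subseteq> U\<close> by auto
next
  case (insert k R)
  have "(T - insert k R) \<union> {k} = T - R" using insert by auto
  then have last_step: "inf (g (T - R)) (a k) \<le> g (T - insert k R)"
    using step[of "T - insert k R" k] insert \<open>T \<subseteq> U\<close> by auto
  have "inf (g T) (Inf_fin (a ` insert k R)) = inf (inf (g T) (Inf_fin (a ` R))) (a k)"
    using insert by (simp add: Inf_fin.insert inf_aci)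
  also have "\<dots> \<le> inf (g (T - R)) (a k)"
    using insert by (intro inf_mono) simp_all
  also have "\<dots> \<le> g (T - insert k R)"
    by (fact last_step)
  finally show ?case .
qed

lemma le_sup_Sup_fin_diff:
  fixes g :: "'i set \<Rightarrow> 'a :: lattice" and b :: "'i \<Rightarrow> 'a"
  assumes step: "\<And>I k. I \<subseteq> U \<Longrightarrow> k \<in> U \<Longrightarrow> g I \<le> sup (g (I - {k})) (b k)"
    and "finite R" "R \<noteq> {}" "R \<subseteq> T" "T \<subseteq> U"
  shows "g T \<le> sup (g (T - R)) (Sup_fin (b ` R))"
  using \<open>finite R\<close> \<open>R \<noteq> {}\<close> \<open>R \<subseteq> T\<close>
proof (induction R rule: finite_ne_induct)
  case (singleton k)
  then show ?case
    using step[of T k] \<open>T \<subseteq> U\<close> by auto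
next
  case (insert k R)
  have "T - R - {k} = T - insert k R" by auto
  then have last_step: "g (T - R) \<le> sup (g (T - insert k R)) (b k)"
    using step[of "T - R" k] insert \<open>T \<subseteq> U\<close> by auto
  have "g T \<le> sup (g (T - R)) (Sup_fin (b ` R))"
    using insert by simp
  also have "\<dots> \<le> sup (sup (g (T - insert k R)) (b k)) (Sup_fin (b ` R))"
    using last_step by (intro sup_mono) simp_all
  also have "\<dots> = sup (g (T - insert k R)) (Sup_fin (b ` insert k R))"
    using insert by (simp add: Sup_fin.insert sup_aci)
  finally show ?case .
qed

theorem lemma3p1:
  fixes a b :: "nat \<Rightarrow> 'a :: distrib_lattice"
    and f :: "(nat \<Rightarrow> 'a) \<Rightarrow> 'a"
    and n :: nat
  assumes "n \<ge> 1"
    and "\<And>i. i \<in> {1..n} \<Longrightarrow> a i < b i"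
    and "\<And>I k. I \<subseteq> {1..n} \<Longrightarrow> k \<in> {1..n} \<Longrightarrow>
           inf (f (ehat a b (I \<union> {k}))) (a k) \<le> f (ehat a b I)"
    and "\<And>I k. I \<subseteq> {1..n} \<Longrightarrow> k \<in> {1..n} \<Longrightarrow>
           f (ehat a b I) \<le> sup (f (ehat a b (I - {k}))) (b k)"
    and "S \<subseteq> T" and "T \<subseteq> {1..n}"
  shows "(S = T \<longrightarrow> f (ehat a b T) \<le> f (ehat a b S)) \<and>
         (S \<noteq> T \<longrightarrow>
            inf (f (ehat a b T)) (Inf_fin (a ` (T - S))) \<le> f (ehat a b S) \<and>
            f (ehat a b T) \<le> sup (f (ehat a b S)) (Sup_fin (b ` (T - S))))"
proof (cases "S = T")
  case False
  have "finite (T - S)" using \<open>T \<subseteq> {1..n}\<close> finite_subset by blast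
  moreover have "T - S \<noteq> {}" using False \<open>S \<subseteq> T\<close> by auto
  moreover have "T - (T - S) = S" using \<open>S \<subseteq> T\<close> by auto
  ultimately show ?thesis
    using inf_Inf_fin_le_diff[of "{1..n}" "\<lambda>I. f (ehat a b I)" a "T - S" T]
      le_sup_Sup_fin_diff[of "{1..n}" "\<lambda>I. f (ehat a b I)" b "T - S" T]
      assms(3,4,6) False by auto
qed simp

end
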